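(* Let $\mathbf A=(A,\wedge,\vee,\cdot,1,\sim,-,\neg)$ be a complete perfect DqRA. Define on $J^\infty(\mathbf A)$: $I_1=\{i\in J^\infty(\mathbf A)\mid i\leqslant 1\}$, $a\preccurlyeq b$ iff $b\leqslant a$, $c\in a\circ b$ iff $c\leqslant a\cdot b$, $a^\sim={\sim}\kappa(a)$, $a^-=-\kappa(a)$, $a^\neg=\neg\kappa(a)$. Then $a^\neg\in J^\infty(\mathbf A)$ for all $a\in J^\infty(\mathbf A)$, and $\mathbf A_+=(J^\infty(\mathbf A),I_1,\preccurlyeq,\circ,{}^\sim,{}^-,{}^\neg)$ is a DqRA-frame.
   Context: An InFL-algebra is $(A,\wedge,\vee,\cdot,1,\sim,-)$ with a lattice, a monoid, and $a\cdot b\leqslant c\iff a\leqslant -(b\cdot{\sim}c)\iff b\leqslant{\sim}(-c\cdot a)$; $a+b:=-({\sim}b\cdot{\sim}a)$. A quasi relation algebra is $(A,\wedge,\vee,\cdot,1,\sim,-,\neg)$ where the $\neg$-free reduct is an InFL-algebra, $\neg\neg a=a$, $\neg(a\wedge b)=\neg a\vee\neg b$, and $\neg(a\cdot b)=\neg a+\neg b$; DqRA means the lattice is distributive. Complete perfect: complete, and every element is the join of the completely join-irreducibles ($J^\infty(\mathbf A)$) below it and the meet of the completely meet-irreducibles above it. $\kappa(j)=\bigvee\{a\in A\mid j\not\leqslant a\}$. For a set $W$ and $\circ:W\times W\to\mathcal P(W)$, $U\circ V=\bigcup\{a\circ b\mid a\in U,b\in V\}$, $x\circ V=\{x\}\circ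 V$, $U\circ y=U\circ\{y\}$; superscripts compose left to right. A DInFL-frame is a tuple $(W,I,\preccurlyeq,\circ,{}^\sim,{}^-)$ with $I\subseteq W$, $\preccurlyeq$ a partial order, $\circ:W\times W\to\mathcal P(W)$, ${}^\sim,{}^-:W\to W$, such that for all $u,v,x,y,z$: (F1) $x\preccurlyeq y$ iff $y\in I\circ x$ iff $y\in x\circ I$; (F2) $x\preccurlyeq y$, $x\in I$ imply $y\in I$; (F3) $x\preccurlyeq y$, $x\in u\circ v$ imply $y\in u\circ v$; (F4) $(x\circ y)\circ z=x\circ(y\circ z)$; (F5) $z^\sim\in x\circ y$ iff $y^-\in z\circ x$; (F6) $x^{\sim-}\preccurlyeq x$ and $x^{-\sim}\preccurlyeq x$. A DqRA-frame additionally has ${}^\neg:W\to W$ with (F7) $x^{\neg\neg}=x$; (F8) $x\preccurlyeq y$ implies $y^\neg\preccurlyeq x^\neg$; (F9) $z^-\in x\circ y$ iff $z^\neg\in y^{\sim\neg}\circ x^{\sim\neg}$. *)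

theory Defs
  imports Main
begin

text \<open>Algebras are given on a complete lattice type 'a (the lattice order is the
type's order); the operations are explicit parameters:
mult = product, one = 1, tld = \<sim> (tilde), mn = - (minus), ng = \<not>.\<close>

definition InFL_algebra ::
  "('a::lattice \<Rightarrow> 'a \<Rightarrow> 'a) \<Rightarrow> 'a \<Rightarrow> ('a \<Rightarrow> 'a) \<Rightarrow> ('a \<Rightarrow> 'a) \<Rightarrow> bool" where
  "InFL_algebra mult one tld mn \<longleftrightarrow>
     (\<forall>a b c. mult (mult a b) c = mult a (mult b c)) \<and>
     (\<forall>a. mult one a = a \<and> mult a one = a) \<and>
     (\<forall>a b c. (mult a b \<le> c \<longleftrightarrow> a \<le> mn (mult b (tld c))) \<and>
              (a \<le> mn (mult b (tld c)) \<longleftrightarrow> b \<le> tld (mult (mn c) a)))"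

definition infl_plus ::
  "('a \<Rightarrow> 'a \<Rightarrow> 'a) \<Rightarrow> ('a \<Rightarrow> 'a) \<Rightarrow> ('a \<Rightarrow> 'a) \<Rightarrow> 'a \<Rightarrow> 'a \<Rightarrow> 'a" where
  "infl_plus mult tld mn a b = mn (mult (tld b) (tld a))"

definition qRA ::
  "('a::lattice \<Rightarrow> 'a \<Rightarrow> 'a) \<Rightarrow> 'a \<Rightarrow> ('a \<Rightarrow> 'a) \<Rightarrow> ('a \<Rightarrow> 'a) \<Rightarrow> ('a \<Rightarrow> 'a) \<Rightarrow> bool" where
  "qRA mult one tld mn ng \<longleftrightarrow>
     InFL_algebra mult one tld mn \<and>
     (\<forall>a. ng (ng a) = a) \<and>
     (\<forall>a b. ng (inf a b) = sup (ng a) (ng b)) \<and>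
     (\<forall>a b. ng (mult a b) = infl_plus mult tld mn (ng a) (ng b))"

definition DqRA ::
  "('a::lattice \<Rightarrow> 'a \<Rightarrow> 'a) \<Rightarrow> 'a \<Rightarrow> ('a \<Rightarrow> 'a) \<Rightarrow> ('a \<Rightarrow> 'a) \<Rightarrow> ('a \<Rightarrow> 'a) \<Rightarrow> bool" where
  "DqRA mult one tld mn ng \<longleftrightarrow>
     qRA mult one tld mn ng \<and>
     (\<forall>a b c::'a. inf a (sup b c) = sup (inf a b) (inf a c))"

definition cji :: "'a::complete_lattice \<Rightarrow> bool" where
  "cji j \<longleftrightarrow> (\<forall>S. j = Sup S \<longrightarrow> j \<in> S)"

definition cmi :: "'a::complete_lattice \<Rightarrow> bool" where
  "cmi m \<longleftrightarrow> (\<forall>S. m = Inf S \<longrightarrow> m \<in> S)"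

definition Jinf :: "'a::complete_lattice set" where
  "Jinf = {j. cji j}"

definition perfect :: "'a::complete_lattice itself \<Rightarrow> bool" where
  "perfect _ \<longleftrightarrow> (\<forall>a::'a. a = Sup {j. cji j \<and> j \<le> a} \<and> a = Inf {m. cmi m \<and> a \<le> m})"

definition kappa :: "'a::complete_lattice \<Rightarrow> 'a" where
  "kappa j = Sup {a. \<not> j \<le> a}"

definition setcomp :: "('b \<Rightarrow> 'b \<Rightarrow> 'b set) \<Rightarrow> 'b set \<Rightarrow> 'b set \<Rightarrow> 'b set" where
  "setcomp cmp U V = (\<Union>a\<in>U. \<Union>b\<in>V. cmp a b)"

definition DInFL_frame ::
  "'b set \<Rightarrow> 'b set \<Rightarrow> ('b \<Rightarrow> 'b \<Rightarrow> bool) \<Rightarrow> ('b \<Rightarrow> 'b \<Rightarrow> 'b set)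
     \<Rightarrow> ('b \<Rightarrow> 'b) \<Rightarrow> ('b \<Rightarrow> 'b) \<Rightarrow> bool" where
  "DInFL_frame W I le cmp tld mn \<longleftrightarrow>
     I \<subseteq> W \<and>
     (\<forall>x\<in>W. \<forall>y\<in>W. cmp x y \<subseteq> W) \<and>
     (\<forall>x\<in>W. tld x \<in> W \<and> mn x \<in> W) \<and>
     (\<forall>x\<in>W. le x x) \<and>
     (\<forall>x\<in>W. \<forall>y\<in>W. le x y \<and> le y x \<longrightarrow> x = y) \<and>
     (\<forall>x\<in>W. \<forall>y\<in>W. \<forall>z\<in>W. le x y \<and> le y z \<longrightarrow> le x z) \<and>
     (\<forall>u\<in>W. \<forall>v\<in>W. \<forall>x\<in>W. \<forall>y\<in>W. \<forall>z\<in>W.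
        \<comment> \<open>F1\<close>
        ((le x y \<longleftrightarrow> y \<in> setcomp cmp I {x}) \<and>
         (y \<in> setcomp cmp I {x} \<longleftrightarrow> y \<in> setcomp cmp {x} I)) \<and>
        \<comment> \<open>F2\<close>
        (le x y \<and> x \<in> I \<longrightarrow> y \<in> I) \<and>
        \<comment> \<open>F3\<close>
        (le x y \<and> x \<in> cmp u v \<longrightarrow> y \<in> cmp u v) \<and>
        \<comment> \<open>F4\<close>
        (setcomp cmp (cmp x y) {z} = setcomp cmp {x} (cmp y z)) \<and>
        \<comment> \<open>F5\<close>
        (tld z \<in> cmp x y \<longleftrightarrow> mn y \<in> cmp z x) \<and>
        \<comment> \<open>F6\<close>
        le (mn (tld x)) x \<and> le (tld (mn x)) x)"

definition DqRA_frame ::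
  "'b set \<Rightarrow> 'b set \<Rightarrow> ('b \<Rightarrow> 'b \<Rightarrow> bool) \<Rightarrow> ('b \<Rightarrow> 'b \<Rightarrow> 'b set)
     \<Rightarrow> ('b \<Rightarrow> 'b) \<Rightarrow> ('b \<Rightarrow> 'b) \<Rightarrow> ('b \<Rightarrow> 'b) \<Rightarrow> bool" where
  "DqRA_frame W I le cmp tld mn ng \<longleftrightarrow>
     DInFL_frame W I le cmp tld mn \<and>
     (\<forall>x\<in>W. ng x \<in> W) \<and>
     (\<forall>x\<in>W. \<forall>y\<in>W. \<forall>z\<in>W.
        \<comment> \<open>F7\<close>
        ng (ng x) = x \<and>
        \<comment> \<open>F8\<close>
        (le x y \<longrightarrow> le (ng y) (ng x)) \<and>
        \<comment> \<open>F9\<close>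
        (mn z \<in> cmp x y \<longleftrightarrow> ng z \<in> cmp (ng (tld y)) (ng (tld x))))"

end

theory Submission
  imports Defs
begin

(* In a complete perfect distributive lattice every completely join-irreducible j is completely
   join-prime, so kappa j is the largest element not above j, and it is completely
   meet-irreducible. The operations \<sim>, - and \<not> are order-reversing bijections, hence they turn
   kappa j back into a completely join-irreducible element, and kappa (\<sim>kappa j) = \<sim>j.
   By residuation, multiplication preserves arbitrary joins, so a join-irreducible below a\<cdot>b lies
   below a'\<cdot>b for some join-irreducible a' \<le> a; this yields (F1) and (F4). The remaining frame
   conditions reduce, via -kappa z \<le> w iff not w\<cdot>z \<le> 0 and its variants, to associativity and the
   rotation u\<cdot>v \<le> 0 iff v\<cdot>\<sim>\<sim>u \<le> 0. *)

lemma mem_Jinf_iff [simp]: "x \<in> Jinf \<longleftrightarrow> cji x"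
  by (simp add: Jinf_def)

definition completely_join_prime :: "'a::complete_lattice \<Rightarrow> bool" where
  "completely_join_prime j \<longleftrightarrow> (\<forall>S. j \<le> Sup S \<longrightarrow> (\<exists>s\<in>S. j \<le> s))"

lemma cmi_meet_prime:
  fixes m a b :: "'a::complete_lattice"
  assumes distrib: "\<And>x y z::'a. inf x (sup y z) = sup (inf x y) (inf x z)"
    and m: "cmi m" and le: "inf a b \<le> m"
  shows "a \<le> m \<or> b \<le> m"
proof -
  have "inf (sup a m) b = sup (inf b a) (inf b m)"
    using distrib[of b a m] by (simp add: inf_commute)
  also have "\<dots> \<le> m" using le by (simp add: inf_commute le_infI2)
  finally have "inf (sup a m) b \<le> m" .
  then have "inf (sup a m) (sup b m) = m"
    using distrib[of "sup a m" b m] by (simp add: inf.absorb2 sup_absorb2)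
  then have "m \<in> {sup a m, sup b m}"
    using m unfolding cmi_def by (metis Inf_insert Inf_empty inf_top_right)
  then show ?thesis by (metis insertE singletonD sup.cobounded1)
qed

lemma cji_completely_join_prime:
  fixes j :: "'a::complete_lattice"
  assumes distrib: "\<And>x y z::'a. inf x (sup y z) = sup (inf x y) (inf x z)"
    and meet_dense: "\<And>a::'a. a = Inf {m. cmi m \<and> a \<le> m}"
    and j: "cji j"
  shows "completely_join_prime j"
  unfolding completely_join_prime_def
proof (intro allI impI)
  fix S assume le: "j \<le> Sup S"
  show "\<exists>s\<in>S. j \<le> s"
  proof (rule ccontr)
    assume none: "\<not> (\<exists>s\<in>S. j \<le> s)"
    (* a completely meet-irreducible element above y but not above j bounds S, being meet-prime *)
    define y where "y = (SUP s\<in>S. inf j s)"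
    have "\<not> j \<le> y"
    proof
      assume "j \<le> y"
      then have "j = (SUP s\<in>S. inf j s)" unfolding y_def by (simp add: antisym SUP_least)
      then have "j \<in> (\<lambda>s. inf j s) ` S" using j unfolding cji_def by blast
      then show False using none by (metis imageE le_iff_inf)
    qed
    then obtain m where m: "cmi m" "y \<le> m" "\<not> j \<le> m"
      using meet_dense[of y] by (metis (mono_tags, lifting) Inf_greatest mem_Collect_eq)
    have "Sup S \<le> m"
    proof (rule Sup_least)
      fix s assume "s \<in> S"
      then have "inf j s \<le> m" using m(2) unfolding y_def by (meson SUP_upper order_trans)
      then show "s \<le> m" using cmi_meet_prime[OF distrib m(1)] m(3) by blast
    qed
    then show False using le m(3) by simp
  qed
qed

lemma kappa_eqI:
  fixes j k :: "'a::complete_lattice"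
  assumes "\<And>a. \<not> j \<le> a \<longleftrightarrow> a \<le> k"
  shows "kappa j = k"
  unfolding kappa_def assms atMost_def[symmetric] by simp

lemma le_kappa_iff:
  fixes j :: "'a::complete_lattice"
  assumes "completely_join_prime j"
  shows "a \<le> kappa j \<longleftrightarrow> \<not> j \<le> a"
proof
  assume a: "a \<le> kappa j"
  show "\<not> j \<le> a"
  proof
    assume "j \<le> a"
    then have "j \<le> Sup {a. \<not> j \<le> a}" using a unfolding kappa_def by simp
    then show False using assms unfolding completely_join_prime_def by blast
  qed
next
  show "\<not> j \<le> a \<Longrightarrow> a \<le> kappa j" unfolding kappa_def by (simp add: Sup_upper)
qed

lemma cmi_kappa:
  fixes j :: "'a::complete_lattice"
  assumes j: "completely_join_prime j"
  shows "cmi (kappa j)"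
  unfolding cmi_def
proof (intro allI impI)
  fix S assume S: "kappa j = Inf S"
  have "\<not> (\<forall>s\<in>S. j \<le> s)"
    using S le_kappa_iff[OF j] by (metis Inf_greatest order_refl)
  then obtain s where "s \<in> S" "s \<le> kappa j"
    using le_kappa_iff[OF j] by blast
  then show "kappa j \<in> S" using S by (metis Inf_lower antisym)
qed

lemma kappa_mono: "j \<le> j' \<Longrightarrow> kappa j \<le> kappa j'"
  unfolding kappa_def by (rule Sup_subset_mono) (auto dest: order_trans)

context
  fixes f :: "'a::complete_lattice \<Rightarrow> 'b::complete_lattice" and g :: "'b \<Rightarrow> 'a"
  assumes f_antimono: "antimono f" and g_antimono: "antimono g"
    and f_g: "\<And>y. f (g y) = y" and g_f: "\<And>x. g (f x) = x"
begin

lemma antimono_inverse_le_iff: "g y \<le> x \<longleftrightarrow> f x \<le> y"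
  by (metis f_antimono g_antimono f_g g_f antimonoD)

lemma le_antimono_inverse_iff: "y \<le> f x \<longleftrightarrow> x \<le> g y"
  by (metis f_antimono g_antimono f_g g_f antimonoD)

lemma antimono_inverse_Sup: "f (Sup S) = Inf (f ` S)"
proof (rule antisym)
  show "f (Sup S) \<le> Inf (f ` S)"
    by (auto intro!: INF_greatest antimonoD[OF f_antimono] Sup_upper)
  have "Sup S \<le> g (Inf (f ` S))"
    by (rule Sup_least) (metis g_f INF_lower antimonoD[OF g_antimono])
  then show "Inf (f ` S) \<le> f (Sup S)"
    by (metis f_g antimonoD[OF f_antimono])
qed

lemma cji_antimono_inverse: "cmi m \<Longrightarrow> cji (g m)"
  unfolding cji_def cmi_def by (metis antimono_inverse_Sup f_g g_f imageE)

lemma kappa_antimono_inverse: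
  assumes "completely_join_prime j"
  shows "kappa (g (kappa j)) = g j"
proof (rule kappa_eqI)
  fix a
  have "g (kappa j) \<le> a \<longleftrightarrow> \<not> j \<le> f a"
    using antimono_inverse_le_iff le_kappa_iff[OF assms] by simp
  then show "\<not> g (kappa j) \<le> a \<longleftrightarrow> a \<le> g j"
    using le_antimono_inverse_iff by simp
qed

end

locale complete_perfect_DqRA =
  fixes mult :: "'a::complete_lattice \<Rightarrow> 'a \<Rightarrow> 'a"
    and one :: 'a
    and tld mn ng :: "'a \<Rightarrow> 'a"
  assumes DqRA: "DqRA mult one tld mn ng"
    and perfect: "perfect TYPE('a)"
begin

lemma mult_assoc: "mult (mult a b) c = mult a (mult b c)"
  and mult_one_left: "mult one a = a"
  and mult_one_right: "mult a one = a"
  and mult_le_iff_le_mn: "mult a b \<le> c \<longleftrightarrow> a \<le> mn (mult b (tld c))"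
  and mult_le_iff_le_tld: "mult a b \<le> c \<longleftrightarrow> b \<le> tld (mult (mn c) a)"
  using DqRA unfolding DqRA_def qRA_def InFL_algebra_def by blast+

lemma ng_ng: "ng (ng a) = a"
  and ng_inf: "ng (inf a b) = sup (ng a) (ng b)"
  and ng_mult: "ng (mult a b) = mn (mult (tld (ng b)) (tld (ng a)))"
  using DqRA unfolding DqRA_def qRA_def infl_plus_def by blast+

lemma inf_sup_distrib: "inf (a::'a) (sup b c) = sup (inf a b) (inf a c)"
  using DqRA unfolding DqRA_def by blast

lemma join_dense: "(a::'a) = Sup {j. cji j \<and> j \<le> a}"
  and meet_dense: "(a::'a) = Inf {m. cmi m \<and> a \<le> m}"
  using perfect unfolding perfect_def by blast+

lemma completely_join_prime: "cji (j::'a) \<Longrightarrow> completely_join_prime j"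
  by (rule cji_completely_join_prime[OF inf_sup_distrib meet_dense])

lemma mn_tld: "mn (tld c) = c"
  by (metis mult_le_iff_le_mn mult_one_left mult_one_right order.antisym order.refl)

lemma tld_mn: "tld (mn c) = c"
  by (metis mult_le_iff_le_tld mult_one_left mult_one_right order.antisym order.refl)

lemma mult_mono_left: "a \<le> a' \<Longrightarrow> mult a b \<le> mult a' b"
  by (meson order.refl order_trans mult_le_iff_le_mn)

lemma mult_mono_right: "b \<le> b' \<Longrightarrow> mult a b \<le> mult a b'"
  by (meson order.refl order_trans mult_le_iff_le_tld)

lemma le_mn_iff: "a \<le> mn b \<longleftrightarrow> mult a b \<le> mn one"
  using mult_le_iff_le_mn[of a b "mn one"] tld_mn mult_one_right by simp

lemma le_tld_iff: "b \<le> tld a \<longleftrightarrow> mult a b \<le> tld one"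
  using mult_le_iff_le_tld[of a b "tld one"] mn_tld mult_one_left mult_one_right by simp

lemma antimono_mn: "antimono mn"
  by (rule antimonoI) (meson le_mn_iff mult_mono_right order.refl order_trans)

lemma antimono_tld: "antimono tld"
  by (rule antimonoI) (meson le_tld_iff mult_mono_left order.refl order_trans)

lemma antimono_ng: "antimono ng"
  by (rule antimonoI) (metis inf.absorb1 ng_inf sup.cobounded2)

lemma le_mn_iff_le_tld: "a \<le> mn b \<longleftrightarrow> b \<le> tld a"
  by (metis antimonoD antimono_mn antimono_tld tld_mn mn_tld)

lemma tld_le_iff_mn_le: "tld a \<le> b \<longleftrightarrow> mn b \<le> a"
  by (metis antimonoD antimono_mn antimono_tld mn_tld tld_mn)

lemma tld_one: "tld one = mn one"
proof -
  have "mult one b \<le> mn one \<longleftrightarrow> mult one b \<le> tld one" for b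
    using le_mn_iff le_mn_iff_le_tld le_tld_iff by blast
  then show ?thesis
    using order.refl order.antisym mult_one_left by metis
qed

lemma mult_le_zero_rotate: "mult a b \<le> mn one \<longleftrightarrow> mult b (tld (tld a)) \<le> mn one"
  by (metis le_mn_iff le_tld_iff mn_tld tld_one)

lemma mult_Sup_left: "mult (Sup A) b = (SUP a\<in>A. mult a b)"
proof (rule antisym)
  show "mult (Sup A) b \<le> (SUP a\<in>A. mult a b)"
    unfolding mult_le_iff_le_mn by (rule Sup_least) (metis mult_le_iff_le_mn SUP_upper)
qed (rule SUP_least, simp add: mult_mono_left Sup_upper)

lemma mult_Sup_right: "mult a (Sup B) = (SUP b\<in>B. mult a b)"
proof (rule antisym)
  show "mult a (Sup B) \<le> (SUP b\<in>B. mult a b)"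
    unfolding mult_le_iff_le_tld by (rule Sup_least) (metis mult_le_iff_le_tld SUP_upper)
qed (rule SUP_least, simp add: mult_mono_right Sup_upper)

lemma cji_le_mult_left:
  assumes "cji c" and "c \<le> mult a b"
  obtains a' where "cji a'" "a' \<le> a" "c \<le> mult a' b"
proof -
  have "c \<le> (SUP a'\<in>{j. cji j \<and> j \<le> a}. mult a' b)"
    using assms(2) join_dense[of a] mult_Sup_left by metis
  then show ?thesis
    using that completely_join_prime[OF assms(1)] unfolding completely_join_prime_def by blast
qed

lemma cji_le_mult_right:
  assumes "cji c" and "c \<le> mult a b"
  obtains b' where "cji b'" "b' \<le> b" "c \<le> mult a b'"
proof -
  have "c \<le> (SUP b'\<in>{j. cji j \<and> j \<le> b}. mult a b')"
    using assms(2) join_dense[of b] mult_Sup_right by metis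
  then show ?thesis
    using that completely_join_prime[OF assms(1)] unfolding completely_join_prime_def by blast
qed

lemma cji_tld_kappa: "cji x \<Longrightarrow> cji (tld (kappa x))"
  and kappa_tld_kappa: "cji x \<Longrightarrow> kappa (tld (kappa x)) = tld x"
  using cji_antimono_inverse[of mn tld] kappa_antimono_inverse[of mn tld]
  by (simp_all add: antimono_mn antimono_tld mn_tld tld_mn completely_join_prime cmi_kappa)

lemma cji_mn_kappa: "cji x \<Longrightarrow> cji (mn (kappa x))"
  and kappa_mn_kappa: "cji x \<Longrightarrow> kappa (mn (kappa x)) = mn x"
  using cji_antimono_inverse[of tld mn] kappa_antimono_inverse[of tld mn]
  by (simp_all add: antimono_mn antimono_tld mn_tld tld_mn completely_join_prime cmi_kappa)

lemma cji_ng_kappa: "cji x \<Longrightarrow> cji (ng (kappa x))"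
  and kappa_ng_kappa: "cji x \<Longrightarrow> kappa (ng (kappa x)) = ng x"
  using cji_antimono_inverse[of ng ng] kappa_antimono_inverse[of ng ng]
  by (simp_all add: antimono_ng ng_ng completely_join_prime cmi_kappa)

lemma tld_kappa_le_iff:
  assumes "cji z"
  shows "tld (kappa z) \<le> w \<longleftrightarrow> \<not> mult z w \<le> mn one"
proof -
  have "tld (kappa z) \<le> w \<longleftrightarrow> \<not> z \<le> mn w"
    using le_kappa_iff[OF completely_join_prime[OF assms]] tld_le_iff_mn_le by blast
  then show ?thesis
    using le_mn_iff[of z w] by blast
qed

lemma mn_kappa_le_iff:
  assumes "cji z"
  shows "mn (kappa z) \<le> w \<longleftrightarrow> \<not> mult w z \<le> mn one"
proof -
  have "mn (kappa z) \<le> w \<longleftrightarrow> \<not> z \<le> tld w"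
    using le_kappa_iff[OF completely_join_prime[OF assms]] tld_le_iff_mn_le by blast
  then show ?thesis
    using le_tld_iff[of z w] unfolding tld_one by blast
qed

lemma ng_kappa_le_iff: "cji z \<Longrightarrow> ng (kappa z) \<le> w \<longleftrightarrow> \<not> z \<le> ng w"
  by (metis le_kappa_iff completely_join_prime antimonoD antimono_ng ng_ng)

abbreviation Jdown :: "'a \<Rightarrow> 'a set" where
  "Jdown x \<equiv> {c \<in> Jinf. c \<le> x}"

lemma setcomp_Jdown_singleton: "setcomp (\<lambda>a b. Jdown (mult a b)) (Jdown a) {b} = Jdown (mult a b)"
  unfolding setcomp_def
  by (auto elim: cji_le_mult_left dest: mult_mono_left intro: order_trans)

lemma setcomp_singleton_Jdown: "setcomp (\<lambda>a b. Jdown (mult a b)) {a} (Jdown b) = Jdown (mult a b)"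
  unfolding setcomp_def
  by (auto elim: cji_le_mult_right dest: mult_mono_right intro: order_trans)

lemma ng_mult_ng: "ng (mult (ng a) (ng b)) = mn (mult (tld b) (tld a))"
  by (simp add: ng_mult ng_ng)

lemma mn_kappa_le_mult_iff:
  assumes "cji x" "cji y" "cji z"
  shows "mn (kappa z) \<le> mult x y \<longleftrightarrow>
    ng (kappa z) \<le> mult (ng (kappa (tld (kappa y)))) (ng (kappa (tld (kappa x))))"
proof -
  have "mn (kappa z) \<le> mult x y \<longleftrightarrow> \<not> mult x (mult y z) \<le> mn one"
    using assms(3) by (simp add: mn_kappa_le_iff mult_assoc)
  also have "\<dots> \<longleftrightarrow> \<not> mult z (mult (tld (tld x)) (tld (tld y))) \<le> mn one"
    by (metis mult_le_zero_rotate mult_assoc)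
  also have "\<dots> \<longleftrightarrow> \<not> z \<le> mn (mult (tld (tld x)) (tld (tld y)))"
    using le_mn_iff by blast
  also have "\<dots> \<longleftrightarrow> ng (kappa z) \<le> mult (ng (tld y)) (ng (tld x))"
    using assms(3) by (simp add: ng_kappa_le_iff ng_mult_ng)
  finally show ?thesis
    using assms(1,2) by (simp add: kappa_tld_kappa)
qed

lemma DInFL_frame_Jinf:
  "DInFL_frame Jinf (Jdown one) (\<lambda>a b. b \<le> a) (\<lambda>a b. Jdown (mult a b))
     (\<lambda>a. tld (kappa a)) (\<lambda>a. mn (kappa a))"
  unfolding DInFL_frame_def setcomp_Jdown_singleton setcomp_singleton_Jdown
  by (auto simp: mult_one_left mult_one_right mult_assoc cji_tld_kappa cji_mn_kappa
      kappa_tld_kappa kappa_mn_kappa mn_tld tld_mn tld_kappa_le_iff mn_kappa_le_iff)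

lemma DqRA_frame_Jinf:
  "DqRA_frame Jinf (Jdown one) (\<lambda>a b. b \<le> a) (\<lambda>a b. Jdown (mult a b))
     (\<lambda>a. tld (kappa a)) (\<lambda>a. mn (kappa a)) (\<lambda>a. ng (kappa a))"
  using DInFL_frame_Jinf unfolding DqRA_frame_def
  by (auto simp: cji_ng_kappa kappa_ng_kappa ng_ng cji_tld_kappa cji_mn_kappa
      mn_kappa_le_mult_iff intro: antimonoD[OF antimono_ng] kappa_mono)

end

theorem mainTheorem10:
  fixes mult :: "'a::complete_lattice \<Rightarrow> 'a \<Rightarrow> 'a"
    and one :: 'a
    and tld mn ng :: "'a \<Rightarrow> 'a"
  assumes "DqRA mult one tld mn ng"
    and "perfect TYPE('a)"
  shows "(\<forall>a\<in>Jinf. ng (kappa a) \<in> (Jinf :: 'a set)) \<and>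
         DqRA_frame (Jinf :: 'a set) {i \<in> Jinf. i \<le> one} (\<lambda>a b. b \<le> a)
           (\<lambda>a b. {c \<in> Jinf. c \<le> mult a b})
           (\<lambda>a. tld (kappa a)) (\<lambda>a. mn (kappa a)) (\<lambda>a. ng (kappa a))"
proof -
  interpret complete_perfect_DqRA mult one tld mn ng
    using assms by unfold_locales
  show ?thesis
    using cji_ng_kappa DqRA_frame_Jinf by simp
qed

end
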